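(* For every positive integer $n$, $k(n)\ge\sqrt{n}$.
   Context: A system on $n$ elements is a triple $(\mathcal{F},w,s)$ where $\mathcal{F}=(F_1,\dots,F_m)$ is a collection of subsets of $[n]$, $w\in[0,1]^m$ with $\sum_i w_i=1$, and $s\in[0,1]^{m\times m\times n}$ with $\sum_p s_{ijp}=1$ for all $i,j$. It is intersecting if $s_{ijp}>0$ implies $p\in F_i\cap F_j$. It is balanced if for all $p\in[n]$, $\sum_{i,j} w_iw_js_{ijp}=1/n$. Its cardinality is the size of the largest set in $\mathcal{F}$. $k(n)$ is the minimum $k$ such that there exists a balanced intersecting system on $n$ elements with cardinality $k$. *)

theory Defs
  imports "HOL-Analysis.Analysis"
begin

definition is_system :: "nat \<Rightarrow> nat \<Rightarrow> (nat \<Rightarrow> nat set) \<Rightarrow> (nat \<Rightarrow> real)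
    \<Rightarrow> (nat \<Rightarrow> nat \<Rightarrow> nat \<Rightarrow> real) \<Rightarrow> bool" where
  "is_system n m F w s \<longleftrightarrow>
     (\<forall>i\<in>{1..m}. F i \<subseteq> {1..n}) \<and>
     (\<forall>i\<in>{1..m}. 0 \<le> w i \<and> w i \<le> 1) \<and>
     (\<Sum>i=1..m. w i) = 1 \<and>
     (\<forall>i\<in>{1..m}. \<forall>j\<in>{1..m}. \<forall>p\<in>{1..n}. 0 \<le> s i j p \<and> s i j p \<le> 1) \<and>
     (\<forall>i\<in>{1..m}. \<forall>j\<in>{1..m}. (\<Sum>p=1..n. s i j p) = 1)"

definition is_intersecting :: "nat \<Rightarrow> nat \<Rightarrow> (nat \<Rightarrow> nat set)
    \<Rightarrow> (nat \<Rightarrow> nat \<Rightarrow> nat \<Rightarrow> real) \<Rightarrow> bool" where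
  "is_intersecting n m F s \<longleftrightarrow>
     (\<forall>i\<in>{1..m}. \<forall>j\<in>{1..m}. \<forall>p\<in>{1..n}. s i j p > 0 \<longrightarrow> p \<in> F i \<inter> F j)"

definition is_balanced :: "nat \<Rightarrow> nat \<Rightarrow> (nat \<Rightarrow> real)
    \<Rightarrow> (nat \<Rightarrow> nat \<Rightarrow> nat \<Rightarrow> real) \<Rightarrow> bool" where
  "is_balanced n m w s \<longleftrightarrow>
     (\<forall>p\<in>{1..n}. (\<Sum>i=1..m. \<Sum>j=1..m. w i * w j * s i j p) = 1 / real n)"

definition system_cardinality :: "nat \<Rightarrow> (nat \<Rightarrow> nat set) \<Rightarrow> nat" where
  "system_cardinality m F = Max ((\<lambda>i. card (F i)) ` {1..m})"

definition k_fun :: "nat \<Rightarrow> nat" where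
  "k_fun n = (LEAST k. \<exists>m F w s. is_system n m F w s \<and> is_intersecting n m F s
      \<and> is_balanced n m w s \<and> system_cardinality m F = k)"

end

theory Submission
  imports Defs
begin

text \<open>Let \<open>a p\<close> be the total weight of the sets containing \<open>p\<close>. Since \<open>s i j p > 0\<close>
  forces \<open>p \<in> F i \<inter> F j\<close> and \<open>s i j p \<le> 1\<close>, balance gives \<open>1 / n \<le> (a p)\<^sup>2\<close>, i.e.
  \<open>a p \<ge> 1 / sqrt n\<close>. Double counting gives \<open>\<Sum>p. a p = \<Sum>i. w i * card (F i) \<le> k\<close>,
  hence \<open>sqrt n = n * (1 / sqrt n) \<le> k\<close>.\<close>

definition cover_weight :: "nat \<Rightarrow> (nat \<Rightarrow> nat set) \<Rightarrow> (nat \<Rightarrow> real) \<Rightarrow> nat \<Rightarrow> real" where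
  "cover_weight m F w p = (\<Sum>i=1..m. if p \<in> F i then w i else 0)"

lemma is_system_weight_nonneg:
  assumes "is_system n m F w s" "i \<in> {1..m}"
  shows "0 \<le> w i"
  using assms unfolding is_system_def by auto

lemma cover_weight_nonneg:
  assumes "is_system n m F w s"
  shows "0 \<le> cover_weight m F w p"
  unfolding cover_weight_def
  by (rule sum_nonneg) (auto intro: is_system_weight_nonneg[OF assms])

lemma balanced_le_cover_weight_squared:
  assumes sys: "is_system n m F w s" and int: "is_intersecting n m F s"
    and bal: "is_balanced n m w s" and p: "p \<in> {1..n}"
  shows "1 / real n \<le> (cover_weight m F w p)\<^sup>2"
proof -
  let ?c = "\<lambda>i. if p \<in> F i then w i else 0"
  have "1 / real n = (\<Sum>i=1..m. \<Sum>j=1..m. w i * w j * s i j p)"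
    using bal p unfolding is_balanced_def by auto
  also have "\<dots> \<le> (\<Sum>i=1..m. \<Sum>j=1..m. ?c i * ?c j)"
  proof (intro sum_mono)
    fix i j assume i: "i \<in> {1..m}" and j: "j \<in> {1..m}"
    have s01: "0 \<le> s i j p" "s i j p \<le> 1" using sys i j p unfolding is_system_def by auto
    have wi: "0 \<le> w i" and wj: "0 \<le> w j"
      using is_system_weight_nonneg[OF sys] i j by auto
    show "w i * w j * s i j p \<le> ?c i * ?c j"
    proof (cases "s i j p = 0")
      case False
      then have "p \<in> F i" "p \<in> F j"
        using s01 int i j p unfolding is_intersecting_def by auto
      moreover have "w i * w j * s i j p \<le> w i * w j"
        using s01 wi wj by (simp add: mult_left_le)
      ultimately show ?thesis by simp
    qed (use wi wj in auto)
  qed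
  also have "\<dots> = (cover_weight m F w p)\<^sup>2"
    unfolding cover_weight_def power2_eq_square sum_product by simp
  finally show ?thesis .
qed

lemma inv_sqrt_le_cover_weight:
  assumes "is_system n m F w s" "is_intersecting n m F s" "is_balanced n m w s" "p \<in> {1..n}"
  shows "1 / sqrt (real n) \<le> cover_weight m F w p"
proof -
  have "sqrt (1 / real n) \<le> sqrt ((cover_weight m F w p)\<^sup>2)"
    using balanced_le_cover_weight_squared[OF assms] by (rule real_sqrt_le_mono)
  then show ?thesis
    using cover_weight_nonneg[OF assms(1)] by (simp add: real_sqrt_divide)
qed

lemma card_le_system_cardinality:
  assumes "i \<in> {1..m}"
  shows "card (F i) \<le> system_cardinality m F"
  unfolding system_cardinality_def using assms by (intro Max_ge) auto

lemma sum_cover_weight_le_system_cardinality: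
  assumes sys: "is_system n m F w s"
  shows "(\<Sum>p=1..n. cover_weight m F w p) \<le> real (system_cardinality m F)"
proof -
  have "(\<Sum>p=1..n. cover_weight m F w p) = (\<Sum>i=1..m. \<Sum>p=1..n. if p \<in> F i then w i else 0)"
    unfolding cover_weight_def by (rule sum.swap)
  also have "\<dots> = (\<Sum>i=1..m. w i * real (card (F i)))"
  proof (rule sum.cong[OF refl])
    fix i assume "i \<in> {1..m}"
    then have "{1..n} \<inter> F i = F i" using sys unfolding is_system_def by auto
    then show "(\<Sum>p=1..n. if p \<in> F i then w i else 0) = w i * real (card (F i))"
      by (simp add: sum.inter_restrict[symmetric])
  qed
  also have "\<dots> \<le> (\<Sum>i=1..m. w i * real (system_cardinality m F))"
    by (intro sum_mono mult_left_mono)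
      (auto intro: is_system_weight_nonneg[OF sys] card_le_system_cardinality)
  also have "\<dots> = real (system_cardinality m F)"
    using sys unfolding is_system_def by (simp add: sum_distrib_right[symmetric])
  finally show ?thesis .
qed

lemma sqrt_le_system_cardinality:
  assumes "n \<ge> 1" and sys: "is_system n m F w s"
    and "is_intersecting n m F s" "is_balanced n m w s"
  shows "sqrt (real n) \<le> real (system_cardinality m F)"
proof -
  have "sqrt (real n) = (\<Sum>p=1..n. 1 / sqrt (real n))"
    using assms(1) by (simp add: real_div_sqrt)
  also have "\<dots> \<le> (\<Sum>p=1..n. cover_weight m F w p)"
    by (intro sum_mono inv_sqrt_le_cover_weight[OF assms(2-4)])
  also have "\<dots> \<le> real (system_cardinality m F)"
    by (rule sum_cover_weight_le_system_cardinality[OF sys])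
  finally show ?thesis .
qed

text \<open>The single set \<open>{1..n}\<close> with uniform \<open>s\<close> is a balanced intersecting system, so the
  \<open>LEAST\<close> in \<open>k_fun\<close> ranges over a nonempty set and is attained.\<close>

lemma k_fun_attained:
  assumes "n \<ge> 1"
  shows "\<exists>m F w s. is_system n m F w s \<and> is_intersecting n m F s
           \<and> is_balanced n m w s \<and> system_cardinality m F = k_fun n"
proof -
  let ?P = "\<lambda>k. \<exists>m F w s. is_system n m F w s \<and> is_intersecting n m F s
      \<and> is_balanced n m w s \<and> system_cardinality m F = k"
  have "?P (system_cardinality 1 (\<lambda>_. {1..n}))"
  proof (intro exI conjI)
    show "is_system n 1 (\<lambda>_. {1..n}) (\<lambda>_. 1) (\<lambda>_ _ _. 1 / real n)"
      unfolding is_system_def using assms by auto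
    show "is_intersecting n 1 (\<lambda>_. {1..n}) (\<lambda>_ _ _. 1 / real n)"
      unfolding is_intersecting_def by auto
    show "is_balanced n 1 (\<lambda>_. 1) (\<lambda>_ _ _. 1 / real n)"
      unfolding is_balanced_def by auto
  qed (rule refl)
  then show ?thesis unfolding k_fun_def by (rule LeastI)
qed

theorem proposition1:
  fixes n :: nat
  assumes "n \<ge> 1"
  shows "real (k_fun n) \<ge> sqrt (real n)"
proof -
  obtain m F w s where "is_system n m F w s" "is_intersecting n m F s" "is_balanced n m w s"
    and "system_cardinality m F = k_fun n"
    using k_fun_attained[OF assms] by blast
  then show ?thesis using sqrt_le_system_cardinality[OF assms] by metis
qed

end
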